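(* Let $\mathcal M$ be a finite polyptych lattice over $F$. The product $\star$ on $\langle\mathcal M\rangle$ (defined below) is associative and commutative; in particular $(m_1\star m_2)\star m_3=m_1\star(m_2\star m_3)$ in $\langle\mathcal M\rangle$ for all $m_1,m_2,m_3\in\mathcal M$.
   Context: Fix a subring $F$ with $\mathbb Z\subseteq F\subseteq\mathbb R$. A polyptych lattice of rank $r$ over $F$ is a collection $\{M_\alpha\}_{\alpha\in I}$ of free $F$-modules of rank $r$ with piecewise $F$-linear maps (continuous and $F$-linear on each cone of some complete $F$-rational fan) $\mu_{\alpha,\beta}:M_\alpha\to M_\beta$ with $\mu_{\alpha,\alpha}=\mathrm{id}$, $\mu_{\alpha,\beta}=\mu_{\beta,\alpha}^{-1}$, $\mu_{\beta,\gamma}\circ\mu_{\alpha,\beta}=\mu_{\alpha,\gamma}$; finite if $I$ is finite. Elements are classes of $\bigsqcup M_\alpha$ under $m_\alpha\sim\mu_{\alpha,\beta}(m_\alpha)$; $\pi_\alpha$ the chart maps; $\mathcal M_{\mathbb R}$ has charts $M_\alpha\otimes\mathbb R$; $m+_\alpha m':=\pi_\alpha^{-1}(\pi_\alpha(m)+\pi_\alpha(m'))$; $\lambda m:=\pi_\alpha^{-1}(\lambda\pi_\alpha(m))$ ($\lambda\ge0$). A point is $p:\mathcal M\to F$ with $p(m)+p(m')=\min_\alpha p(m+_\alpha m')$, $p(\lambda m)=\lambda p(m)$ ($\lambda\in F_{\ge 0}$), extended continuously and piecewise linearly to $\mathcal M_{\mathbb R}$; $\mathrm{Sp}(\mathcal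 M)$ is the set of points. For $p\in\mathrm{Sp}(\mathcal M)$, $a\in F$, the PL half-space is $\mathcal H_{p,a}=\{m\in\mathcal M_{\mathbb R}:p(m)\ge a\}$; the point-convex hull over $F$ of $S\subseteq\mathcal M_{\mathbb R}$ is $\mathrm{p\text{-}conv}_F(S)=\bigcap\{\mathcal H_{p,a}: p\in\mathrm{Sp}(\mathcal M),a\in F, S\subseteq\mathcal H_{p,a}\}$. $\langle\mathcal M\rangle$ is the free commutative idempotent semigroup (operation $\oplus$) on the elements of $\mathcal M$ modulo the relations $\bigoplus_{m\in S}m=\bigoplus_{m\in S'}m$ for finite $S,S'\subseteq\mathcal M$ with $\mathrm{p\text{-}conv}_F(S)=\mathrm{p\text{-}conv}_F(S')$, with a formally adjoined additive identity $\infty$. The product is $m_1\star m_2:=\bigoplus_{\alpha\in I}(m_1+_\alpha m_2)$ for $m_1,m_2\in\mathcal M$, $m\star\infty=\infty$, extended by distributivity over $\oplus$. *)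

theory Defs
  imports "HOL-Analysis.Analysis"
begin

text \<open>A free F-module of rank r is modelled as the set of
  F-points of real^'n (r = CARD('n)), i.e. a basis has been chosen in each chart.
  The index set I of the (finite) polyptych lattice is a finite type 'i.
  The maps mu a b are given by their (unique) continuous piecewise-linear
  extensions to the real charts real^'n = M_a tensor R.\<close>

definition F_subring :: "real set \<Rightarrow> bool" where
  "F_subring F \<longleftrightarrow> \<int> \<subseteq> F \<and> (\<forall>x\<in>F. \<forall>y\<in>F. x + y \<in> F \<and> x - y \<in> F \<and> x * y \<in> F)"

definition Fvec :: "real set \<Rightarrow> (real^'n) set" where
  "Fvec F = {v. \<forall>j. v $ j \<in> F}"

definition rational_cone :: "real set \<Rightarrow> (real^'n) set \<Rightarrow> bool" where
  "rational_cone F c \<longleftrightarrow> (\<exists>V. finite V \<and> V \<subseteq> Fvec F \<and>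
      c = {\<Sum>v\<in>V. u v *\<^sub>R v | u. \<forall>v\<in>V. 0 \<le> u v})"

definition complete_fan :: "real set \<Rightarrow> (real^'n) set set \<Rightarrow> bool" where
  "complete_fan F C \<longleftrightarrow> finite C \<and> (\<forall>c\<in>C. rational_cone F c)
     \<and> (\<forall>c\<in>C. \<forall>d. d face_of c \<and> d \<noteq> {} \<longrightarrow> d \<in> C)
     \<and> (\<forall>c\<in>C. \<forall>d\<in>C. (c \<inter> d) face_of c \<and> (c \<inter> d) face_of d)
     \<and> \<Union>C = UNIV"

definition pw_F_linear :: "real set \<Rightarrow> (real^'n \<Rightarrow> real^'n) \<Rightarrow> bool" where
  "pw_F_linear F f \<longleftrightarrow> continuous_on UNIV f \<and> f ` Fvec F \<subseteq> Fvec F \<and>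
     (\<exists>C. complete_fan F C \<and>
        (\<forall>c\<in>C. \<exists>A::real^'n^'n. (\<forall>i j. A $ i $ j \<in> F) \<and> (\<forall>x\<in>c. f x = A *v x)))"

definition polyptych ::
  "real set \<Rightarrow> ('i::finite \<Rightarrow> 'i \<Rightarrow> real^'n \<Rightarrow> real^'n) \<Rightarrow> bool" where
  "polyptych F \<mu> \<longleftrightarrow> F_subring F \<and> (\<forall>a b. pw_F_linear F (\<mu> a b))
     \<and> (\<forall>a. \<mu> a a = id)
     \<and> (\<forall>a b. \<mu> a b \<circ> \<mu> b a = id)
     \<and> (\<forall>a b c. \<mu> b c \<circ> \<mu> a b = \<mu> a c)"

text \<open>Elements of M_R: compatible families of chart coordinates.\<close>
definition MR :: "('i::finite \<Rightarrow> 'i \<Rightarrow> real^'n \<Rightarrow> real^'n) \<Rightarrow> ('i \<Rightarrow> real^'n) set" where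
  "MR \<mu> = {m. \<forall>a b. m b = \<mu> a b (m a)}"

definition Mset :: "real set \<Rightarrow> ('i::finite \<Rightarrow> 'i \<Rightarrow> real^'n \<Rightarrow> real^'n) \<Rightarrow> ('i \<Rightarrow> real^'n) set" where
  "Mset F \<mu> = {m \<in> MR \<mu>. \<forall>a. m a \<in> Fvec F}"

definition chart_inv :: "('i::finite \<Rightarrow> 'i \<Rightarrow> real^'n \<Rightarrow> real^'n) \<Rightarrow> 'i \<Rightarrow> real^'n \<Rightarrow> ('i \<Rightarrow> real^'n)" where
  "chart_inv \<mu> a v = (\<lambda>b. \<mu> a b v)"

definition padd :: "('i::finite \<Rightarrow> 'i \<Rightarrow> real^'n \<Rightarrow> real^'n) \<Rightarrow> 'i \<Rightarrow> ('i \<Rightarrow> real^'n) \<Rightarrow> ('i \<Rightarrow> real^'n) \<Rightarrow> ('i \<Rightarrow> real^'n)" where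
  "padd \<mu> a m m' = chart_inv \<mu> a (m a + m' a)"

text \<open>Points: F-valued on M, min-additive, F_{>=0}-homogeneous, with a continuous
  piecewise-linear extension to M_R (p is given directly on M_R).\<close>
definition is_point :: "real set \<Rightarrow> ('i::finite \<Rightarrow> 'i \<Rightarrow> real^'n \<Rightarrow> real^'n) \<Rightarrow> (('i \<Rightarrow> real^'n) \<Rightarrow> real) \<Rightarrow> bool" where
  "is_point F \<mu> p \<longleftrightarrow>
     (\<forall>m\<in>Mset F \<mu>. p m \<in> F)
   \<and> (\<forall>m\<in>Mset F \<mu>. \<forall>m'\<in>Mset F \<mu>. p m + p m' = Min (range (\<lambda>a. p (padd \<mu> a m m'))))
   \<and> (\<forall>m\<in>Mset F \<mu>. \<forall>l\<in>F. 0 \<le> l \<longrightarrow> (\<forall>a. p (chart_inv \<mu> a (l *\<^sub>R m a)) = l * p m))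
   \<and> (\<forall>a. continuous_on UNIV (\<lambda>v. p (chart_inv \<mu> a v)) \<and>
        (\<exists>C. complete_fan UNIV C \<and> (\<forall>c\<in>C. \<exists>w. \<forall>v\<in>c. p (chart_inv \<mu> a v) = w \<bullet> v)))"

definition halfspace :: "('i::finite \<Rightarrow> 'i \<Rightarrow> real^'n \<Rightarrow> real^'n) \<Rightarrow> (('i \<Rightarrow> real^'n) \<Rightarrow> real) \<Rightarrow> real \<Rightarrow> ('i \<Rightarrow> real^'n) set" where
  "halfspace \<mu> p t = {m \<in> MR \<mu>. t \<le> p m}"

definition pconv :: "real set \<Rightarrow> ('i::finite \<Rightarrow> 'i \<Rightarrow> real^'n \<Rightarrow> real^'n) \<Rightarrow> ('i \<Rightarrow> real^'n) set \<Rightarrow> ('i \<Rightarrow> real^'n) set" where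
  "pconv F \<mu> S = {m \<in> MR \<mu>. \<forall>p t. is_point F \<mu> p \<and> t \<in> F \<and> S \<subseteq> halfspace \<mu> p t \<longrightarrow> m \<in> halfspace \<mu> p t}"

text \<open>The free commutative idempotent semigroup on M is modelled by finite nonempty
  subsets of M under union; mrel is the congruence generated by the p-conv relations.\<close>
inductive mrel :: "real set \<Rightarrow> ('i::finite \<Rightarrow> 'i \<Rightarrow> real^'n \<Rightarrow> real^'n) \<Rightarrow> ('i \<Rightarrow> real^'n) set \<Rightarrow> ('i \<Rightarrow> real^'n) set \<Rightarrow> bool"
  for F \<mu> where
  base: "\<lbrakk>finite S; finite S'; S \<noteq> {}; S' \<noteq> {}; S \<subseteq> Mset F \<mu>; S' \<subseteq> Mset F \<mu>;
          pconv F \<mu> S = pconv F \<mu> S'\<rbrakk> \<Longrightarrow> mrel F \<mu> S S'"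
| refl: "\<lbrakk>finite S; S \<noteq> {}; S \<subseteq> Mset F \<mu>\<rbrakk> \<Longrightarrow> mrel F \<mu> S S"
| sym: "mrel F \<mu> S S' \<Longrightarrow> mrel F \<mu> S' S"
| trans: "mrel F \<mu> S S' \<Longrightarrow> mrel F \<mu> S' S'' \<Longrightarrow> mrel F \<mu> S S''"
| cong: "\<lbrakk>mrel F \<mu> S S'; finite T; T \<noteq> {}; T \<subseteq> Mset F \<mu>\<rbrakk> \<Longrightarrow> mrel F \<mu> (S \<union> T) (S' \<union> T)"

text \<open>Representatives of elements of <M>: None is the adjoined identity infinity,
  Some S stands for the oplus-sum of the elements of S.\<close>
definition angle_elem :: "real set \<Rightarrow> ('i::finite \<Rightarrow> 'i \<Rightarrow> real^'n \<Rightarrow> real^'n) \<Rightarrow> ('i \<Rightarrow> real^'n) set option \<Rightarrow> bool" where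
  "angle_elem F \<mu> x \<longleftrightarrow> x = None \<or> (\<exists>S. x = Some S \<and> finite S \<and> S \<noteq> {} \<and> S \<subseteq> Mset F \<mu>)"

definition angle_eq :: "real set \<Rightarrow> ('i::finite \<Rightarrow> 'i \<Rightarrow> real^'n \<Rightarrow> real^'n) \<Rightarrow> ('i \<Rightarrow> real^'n) set option \<Rightarrow> ('i \<Rightarrow> real^'n) set option \<Rightarrow> bool" where
  "angle_eq F \<mu> x y \<longleftrightarrow> (x = None \<and> y = None) \<or> (\<exists>S T. x = Some S \<and> y = Some T \<and> mrel F \<mu> S T)"

text \<open>The product, extended by distributivity over oplus; infinity is absorbing.\<close>
definition star :: "('i::finite \<Rightarrow> 'i \<Rightarrow> real^'n \<Rightarrow> real^'n) \<Rightarrow> ('i \<Rightarrow> real^'n) set option \<Rightarrow> ('i \<Rightarrow> real^'n) set option \<Rightarrow> ('i \<Rightarrow> real^'n) set option" where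
  "star \<mu> x y = (case (x, y) of (Some S, Some T) \<Rightarrow> Some {padd \<mu> a s t | a s t. s \<in> S \<and> t \<in> T} | _ \<Rightarrow> None)"

end

theory Submission
  imports Defs
begin

text \<open>Every point p is a tropical valuation on the products: for finite nonempty X, Y
  one has min p(X \<star> Y) = min p(X) + min p(Y), because p(m +_a m') \<ge> p m + p m' for
  every chart a, with equality for some a.  A finite set S lies in the half-space
  p \<ge> t iff t \<le> min p(S), so p-conv S is determined by the function p \<mapsto> min p(S).
  For a triple product this function is p \<mapsto> min p(X) + min p(Y) + min p(Z) under
  either bracketing, hence both bracketings have the same p-convex hull and are
  identified in \<langle>M\<rangle>.  Commutativity holds already on representatives.\<close>

definition chart_sums :: "('i::finite \<Rightarrow> 'i \<Rightarrow> real^'n \<Rightarrow> real^'n) \<Rightarrow> ('i \<Rightarrow> real^'n) set \<Rightarrow> ('i \<Rightarrow> real^'n) set \<Rightarrow> ('i \<Rightarrow> real^'n) set" where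
  "chart_sums \<mu> X Y = {padd \<mu> a s t | a s t. s \<in> X \<and> t \<in> Y}"

lemma star_Some_Some: "star \<mu> (Some X) (Some Y) = Some (chart_sums \<mu> X Y)"
  by (simp add: star_def chart_sums_def)

lemma chart_sums_commute: "chart_sums \<mu> X Y = chart_sums \<mu> Y X"
  unfolding chart_sums_def padd_def by (metis (no_types, lifting) add.commute)

lemma finite_chart_sums:
  assumes "finite X" "finite Y"
  shows "finite (chart_sums \<mu> X Y)"
proof -
  have "chart_sums \<mu> X Y = (\<lambda>(a, s, t). padd \<mu> a s t) ` (UNIV \<times> X \<times> Y)"
    unfolding chart_sums_def image_def by fastforce
  with assms show ?thesis by simp
qed

lemma chart_sums_nonempty: "X \<noteq> {} \<Longrightarrow> Y \<noteq> {} \<Longrightarrow> chart_sums \<mu> X Y \<noteq> {}"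
  unfolding chart_sums_def by blast

lemma padd_in_Mset:
  assumes P: "polyptych F \<mu>" and s: "s \<in> Mset F \<mu>" and t: "t \<in> Mset F \<mu>"
  shows "padd \<mu> a s t \<in> Mset F \<mu>"
proof -
  have trans: "\<mu> b c (\<mu> a b v) = \<mu> a c v" for b c v
    using P unfolding polyptych_def by (metis comp_apply)
  have "s a + t a \<in> Fvec F"
    using P s t unfolding polyptych_def Mset_def Fvec_def F_subring_def by auto
  moreover have "\<mu> a b ` Fvec F \<subseteq> Fvec F" for b
    using P unfolding polyptych_def pw_F_linear_def by blast
  ultimately have "\<mu> a b (s a + t a) \<in> Fvec F" for b by blast
  with trans show ?thesis
    unfolding Mset_def MR_def padd_def chart_inv_def by auto
qed

lemma chart_sums_subset_Mset:
  "polyptych F \<mu> \<Longrightarrow> X \<subseteq> Mset F \<mu> \<Longrightarrow> Y \<subseteq> Mset F \<mu> \<Longrightarrow> chart_sums \<mu> X Y \<subseteq> Mset F \<mu>"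
  using padd_in_Mset unfolding chart_sums_def by blast

lemma point_padd_eq_Min:
  assumes "is_point F \<mu> p" "m \<in> Mset F \<mu>" "m' \<in> Mset F \<mu>"
  shows "p m + p m' = Min (range (\<lambda>a. p (padd \<mu> a m m')))"
  using assms unfolding is_point_def by blast

lemma point_padd_ge:
  assumes "is_point F \<mu> p" "m \<in> Mset F \<mu>" "m' \<in> Mset F \<mu>"
  shows "p m + p m' \<le> p (padd \<mu> a m m')"
  unfolding point_padd_eq_Min[OF assms] by (rule Min_le) auto

lemma point_padd_attained:
  assumes "is_point F \<mu> p" "m \<in> Mset F \<mu>" "m' \<in> Mset F \<mu>"
  obtains a where "p (padd \<mu> a m m') = p m + p m'"
proof -
  have "Min (range (\<lambda>a. p (padd \<mu> a m m'))) \<in> range (\<lambda>a. p (padd \<mu> a m m'))"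
    by (rule Min_in) auto
  then obtain a where "Min (range (\<lambda>a. p (padd \<mu> a m m'))) = p (padd \<mu> a m m')"
    by blast
  with point_padd_eq_Min[OF assms] have "p (padd \<mu> a m m') = p m + p m'" by simp
  then show ?thesis by (rule that)
qed

lemma Min_point_chart_sums:
  assumes p: "is_point F \<mu> p"
    and X: "finite X" "X \<noteq> {}" "X \<subseteq> Mset F \<mu>"
    and Y: "finite Y" "Y \<noteq> {}" "Y \<subseteq> Mset F \<mu>"
  shows "Min (p ` chart_sums \<mu> X Y) = Min (p ` X) + Min (p ` Y)"
proof (rule Min_eqI)
  show "finite (p ` chart_sums \<mu> X Y)" using X Y by (simp add: finite_chart_sums)
next
  fix v assume "v \<in> p ` chart_sums \<mu> X Y"
  then obtain a x y where v: "v = p (padd \<mu> a x y)" and "x \<in> X" "y \<in> Y"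
    unfolding chart_sums_def by blast
  then have "Min (p ` X) + Min (p ` Y) \<le> p x + p y" using X Y by (simp add: add_mono)
  also have "\<dots> \<le> v" using v point_padd_ge[OF p] \<open>x \<in> X\<close> \<open>y \<in> Y\<close> X Y by blast
  finally show "Min (p ` X) + Min (p ` Y) \<le> v" .
next
  have "Min (p ` X) \<in> p ` X" "Min (p ` Y) \<in> p ` Y"
    using X Y by (simp_all add: Min_in)
  then obtain x y where x: "x \<in> X" "Min (p ` X) = p x" and y: "y \<in> Y" "Min (p ` Y) = p y"
    by blast
  obtain a where "p (padd \<mu> a x y) = p x + p y"
    using point_padd_attained[OF p] x y X Y by blast
  moreover have "padd \<mu> a x y \<in> chart_sums \<mu> X Y"
    unfolding chart_sums_def using x y by blast
  ultimately show "Min (p ` X) + Min (p ` Y) \<in> p ` chart_sums \<mu> X Y"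
    using x y by (simp add: rev_image_eqI)
qed

lemma subset_halfspace_iff_le_Min:
  "finite S \<Longrightarrow> S \<noteq> {} \<Longrightarrow> S \<subseteq> MR \<mu> \<Longrightarrow> S \<subseteq> halfspace \<mu> p t \<longleftrightarrow> t \<le> Min (p ` S)"
  unfolding halfspace_def by auto

lemma pconv_eqI_Min:
  assumes S: "finite S" "S \<noteq> {}" "S \<subseteq> Mset F \<mu>"
    and S': "finite S'" "S' \<noteq> {}" "S' \<subseteq> Mset F \<mu>"
    and Min_eq: "\<And>p. is_point F \<mu> p \<Longrightarrow> Min (p ` S) = Min (p ` S')"
  shows "pconv F \<mu> S = pconv F \<mu> S'"
proof -
  have "Mset F \<mu> \<subseteq> MR \<mu>" unfolding Mset_def by blast
  with S S' have "is_point F \<mu> p \<Longrightarrow> S \<subseteq> halfspace \<mu> p t \<longleftrightarrow> S' \<subseteq> halfspace \<mu> p t" for p t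
    by (simp add: subset_halfspace_iff_le_Min Min_eq)
  then show ?thesis unfolding pconv_def by blast
qed

lemma pconv_chart_sums_assoc:
  assumes P: "polyptych F \<mu>"
    and X: "finite X" "X \<noteq> {}" "X \<subseteq> Mset F \<mu>"
    and Y: "finite Y" "Y \<noteq> {}" "Y \<subseteq> Mset F \<mu>"
    and Z: "finite Z" "Z \<noteq> {}" "Z \<subseteq> Mset F \<mu>"
  shows "pconv F \<mu> (chart_sums \<mu> (chart_sums \<mu> X Y) Z) = pconv F \<mu> (chart_sums \<mu> X (chart_sums \<mu> Y Z))"
proof -
  have XY: "finite (chart_sums \<mu> X Y)" "chart_sums \<mu> X Y \<noteq> {}" "chart_sums \<mu> X Y \<subseteq> Mset F \<mu>"
    using X Y by (simp_all add: finite_chart_sums chart_sums_nonempty chart_sums_subset_Mset[OF P])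
  have YZ: "finite (chart_sums \<mu> Y Z)" "chart_sums \<mu> Y Z \<noteq> {}" "chart_sums \<mu> Y Z \<subseteq> Mset F \<mu>"
    using Y Z by (simp_all add: finite_chart_sums chart_sums_nonempty chart_sums_subset_Mset[OF P])
  show ?thesis
  proof (rule pconv_eqI_Min)
    fix p assume p: "is_point F \<mu> p"
    show "Min (p ` chart_sums \<mu> (chart_sums \<mu> X Y) Z) = Min (p ` chart_sums \<mu> X (chart_sums \<mu> Y Z))"
      by (simp add: Min_point_chart_sums[OF p] X Y Z XY YZ add.assoc)
  qed (use X Y Z XY YZ in \<open>simp_all add: finite_chart_sums chart_sums_nonempty chart_sums_subset_Mset[OF P]\<close>)
qed

lemma angle_elem_SomeE:
  assumes "angle_elem F \<mu> x" "x \<noteq> None"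
  obtains S where "x = Some S" "finite S" "S \<noteq> {}" "S \<subseteq> Mset F \<mu>"
  using assms unfolding angle_elem_def by blast

lemma angle_eq_star_commute:
  assumes P: "polyptych F \<mu>" and "angle_elem F \<mu> x" "angle_elem F \<mu> y"
  shows "angle_eq F \<mu> (star \<mu> x y) (star \<mu> y x)"
proof (cases "x = None \<or> y = None")
  case True
  then show ?thesis by (auto simp: angle_eq_def star_def split: option.splits)
next
  case False
  with assms obtain S T where "x = Some S" "finite S" "S \<noteq> {}" "S \<subseteq> Mset F \<mu>"
    and "y = Some T" "finite T" "T \<noteq> {}" "T \<subseteq> Mset F \<mu>"
    by (metis angle_elem_SomeE)
  moreover from calculation have "mrel F \<mu> (chart_sums \<mu> S T) (chart_sums \<mu> S T)"
    by (intro mrel.refl finite_chart_sums chart_sums_nonempty chart_sums_subset_Mset[OF P])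
  ultimately show ?thesis by (simp add: angle_eq_def star_Some_Some chart_sums_commute)
qed

lemma angle_eq_star_assoc:
  assumes P: "polyptych F \<mu>" and "angle_elem F \<mu> x" "angle_elem F \<mu> y" "angle_elem F \<mu> z"
  shows "angle_eq F \<mu> (star \<mu> (star \<mu> x y) z) (star \<mu> x (star \<mu> y z))"
proof (cases "x = None \<or> y = None \<or> z = None")
  case True
  then show ?thesis by (auto simp: angle_eq_def star_def split: option.splits)
next
  case False
  with assms obtain S T U where S: "x = Some S" "finite S" "S \<noteq> {}" "S \<subseteq> Mset F \<mu>"
    and T: "y = Some T" "finite T" "T \<noteq> {}" "T \<subseteq> Mset F \<mu>"
    and U: "z = Some U" "finite U" "U \<noteq> {}" "U \<subseteq> Mset F \<mu>"
    by (metis angle_elem_SomeE)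
  have "mrel F \<mu> (chart_sums \<mu> (chart_sums \<mu> S T) U) (chart_sums \<mu> S (chart_sums \<mu> T U))"
    by (rule mrel.base)
       (use S T U pconv_chart_sums_assoc[OF P] in
        \<open>simp_all add: finite_chart_sums chart_sums_nonempty chart_sums_subset_Mset[OF P]\<close>)
  with S T U show ?thesis by (simp add: angle_eq_def star_Some_Some)
qed

theorem mainTheorem6:
  fixes F :: "real set" and \<mu> :: "'i::finite \<Rightarrow> 'i \<Rightarrow> real^'n \<Rightarrow> real^'n"
  assumes "polyptych F \<mu>"
  shows "(\<forall>x y. angle_elem F \<mu> x \<and> angle_elem F \<mu> y \<longrightarrow>
            angle_eq F \<mu> (star \<mu> x y) (star \<mu> y x))
       \<and> (\<forall>x y z. angle_elem F \<mu> x \<and> angle_elem F \<mu> y \<and> angle_elem F \<mu> z \<longrightarrow>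
            angle_eq F \<mu> (star \<mu> (star \<mu> x y) z) (star \<mu> x (star \<mu> y z)))"
  using angle_eq_star_commute[OF assms] angle_eq_star_assoc[OF assms] by blast

end
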